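(* Let $(x_n,y_n)_{n\in\mathbb Z}$ and $(x'_n,y'_n)_{n\in\mathbb Z}$ be two elliptic sequences on the same biquadratic polynomial $F$, in general position. For integers $m\ge1$, $r,s$, let $$P_{m,r,s}(x)=\frac{(x-x_r)(x-x_{r+1})\cdots(x-x_{r+m-1})}{(x-x'_s)(x-x'_{s+1})\cdots(x-x'_{s+m-1})}.$$ Then there are a constant $C_{m,r,s}$ and a polynomial $D_{m,r,s}$ of degree at most $2$ such that, as rational functions of $y$, $$\mathcal D P_{m,r,s}(y)=C_{m,r,s}\,Y_2(y)\,\frac{(y-y_r)\cdots(y-y_{r+m-2})}{(y-y'_{s-1})(y-y'_s)\cdots(y-y'_{s+m-1})},\qquad \mathcal M P_{m,r,s}(y)=D_{m,r,s}(y)\,\frac{(y-y_r)\cdots(y-y_{r+m-2})}{(y-y'_{s-1})\cdots(y-y'_{s+m-1})}.$$ Moreover $C_{1,r,s}=\dfrac{x_r-x'_s}{X_2(x'_s)}$, $D_{1,r,s}(y)=\dfrac{Y_0(y)+(x_r+x'_s)Y_1(y)/2+x_rx'_sY_2(y)}{X_2(x'_s)}$, and for every $m\ge1$: $$D_{m,r,s}(y_{r-1})=-\tfrac12C_{m,r,s}Y_2(y_{r-1})(x_r-x_{r-1}),\quad D_{m,r,s}(y_{r+m-1})=\tfrac12C_{m,r,s}Y_2(y_{r+m-1})(x_{r+m}-x_{r+m-1}),$$ $$D_{m,r,s}(y'_{s-1})=\tfrac12C_{m,r,s}Y_2(y'_{s-1})(x'_s-x'_{s-1}),\quad D_{m,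r,s}(y'_{s+m-1})=-\tfrac12C_{m,r,s}Y_2(y'_{s+m-1})(x'_{s+m}-x'_{s+m-1}).$$
   Context: $F(x,y)=\sum_{i,j=0}^2c_{i,j}x^iy^j=Y_0(y)+xY_1(y)+x^2Y_2(y)=X_0(x)+yX_1(x)+y^2X_2(x)$. An elliptic sequence on $F$ is a doubly infinite sequence $(x_n,y_n)_{n\in\mathbb Z}$ such that for every $n$, $x_n,x_{n+1}$ are the two roots of $x\mapsto F(x,y_n)$ and $y_{n-1},y_n$ are the two roots of $y\mapsto F(x_n,y)$. "General position" means all the $x_n,x'_n$ are pairwise distinct, all the $y_n,y'_n$ are pairwise distinct, and $X_2,Y_2$ do not vanish at these points. For a rational function $f$ and a value $y$, let $x^+,x^-$ be the two roots of $F(x,y)=0$ and define $(\mathcal Df)(y)=\frac{f(x^+)-f(x^-)}{x^+-x^-}$ and $(\mathcal Mf)(y)=\frac{f(x^+)+f(x^-)}2$; these are symmetric in $x^\pm$ and define rational functions of $y$; on the lattice, $(\mathcal Df)(y_n)=\frac{f(x_{n+1})-f(x_n)}{x_{n+1}-x_n}$, $(\mathcal Mf)(y_n)=\frac{f(x_n)+f(x_{n+1})}2$. Empty products equal $1$. *)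

theory Defs
  imports "HOL-Computational_Algebra.Polynomial" Complex_Main
begin

definition Fb :: "(nat \<Rightarrow> nat \<Rightarrow> complex) \<Rightarrow> complex \<Rightarrow> complex \<Rightarrow> complex" where
  "Fb c x y = (\<Sum>i\<le>2. \<Sum>j\<le>2. c i j * x ^ i * y ^ j)"

text \<open>Y_i(y) = sum_j c i j y^j, so that F(x,y) = Y_0(y) + x Y_1(y) + x^2 Y_2(y).\<close>
definition Ycoef :: "(nat \<Rightarrow> nat \<Rightarrow> complex) \<Rightarrow> nat \<Rightarrow> complex \<Rightarrow> complex" where
  "Ycoef c i y = (\<Sum>j\<le>2. c i j * y ^ j)"

text \<open>X_j(x) = sum_i c i j x^i, so that F(x,y) = X_0(x) + y X_1(x) + y^2 X_2(x).\<close>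
definition Xcoef :: "(nat \<Rightarrow> nat \<Rightarrow> complex) \<Rightarrow> nat \<Rightarrow> complex \<Rightarrow> complex" where
  "Xcoef c j x = (\<Sum>i\<le>2. c i j * x ^ i)"

definition elliptic_seq :: "(nat \<Rightarrow> nat \<Rightarrow> complex) \<Rightarrow> (int \<Rightarrow> complex) \<Rightarrow> (int \<Rightarrow> complex) \<Rightarrow> bool" where
  "elliptic_seq c x y \<longleftrightarrow>
     (\<forall>n t. Fb c t (y n) = Ycoef c 2 (y n) * (t - x n) * (t - x (n + 1))) \<and>
     (\<forall>n t. Fb c (x n) t = Xcoef c 2 (x n) * (t - y (n - 1)) * (t - y n))"

definition general_position ::
  "(nat \<Rightarrow> nat \<Rightarrow> complex) \<Rightarrow> (int \<Rightarrow> complex) \<Rightarrow> (int \<Rightarrow> complex) \<Rightarrow> (int \<Rightarrow> complex) \<Rightarrow> (int \<Rightarrow> complex) \<Rightarrow> bool" where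
  "general_position c x y x' y' \<longleftrightarrow>
     inj x \<and> inj x' \<and> (\<forall>n m. x n \<noteq> x' m) \<and>
     inj y \<and> inj y' \<and> (\<forall>n m. y n \<noteq> y' m) \<and>
     (\<forall>n. Xcoef c 2 (x n) \<noteq> 0 \<and> Xcoef c 2 (x' n) \<noteq> 0) \<and>
     (\<forall>n. Ycoef c 2 (y n) \<noteq> 0 \<and> Ycoef c 2 (y' n) \<noteq> 0)"

definition root_pair :: "(nat \<Rightarrow> nat \<Rightarrow> complex) \<Rightarrow> complex \<Rightarrow> complex \<Rightarrow> complex \<Rightarrow> bool" where
  "root_pair c y x1 x2 \<longleftrightarrow> Ycoef c 2 y \<noteq> 0 \<and> x1 \<noteq> x2 \<and> Fb c x1 y = 0 \<and> Fb c x2 y = 0"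

text \<open>The operators D and M evaluated at y, given the two roots x1, x2 of F(.,y).\<close>
definition Dop :: "(complex \<Rightarrow> complex) \<Rightarrow> complex \<Rightarrow> complex \<Rightarrow> complex" where
  "Dop f x1 x2 = (f x1 - f x2) / (x1 - x2)"

definition Mop :: "(complex \<Rightarrow> complex) \<Rightarrow> complex \<Rightarrow> complex \<Rightarrow> complex" where
  "Mop f x1 x2 = (f x1 + f x2) / 2"

definition Pmrs :: "(int \<Rightarrow> complex) \<Rightarrow> (int \<Rightarrow> complex) \<Rightarrow> nat \<Rightarrow> int \<Rightarrow> int \<Rightarrow> complex \<Rightarrow> complex" where
  "Pmrs x x' m r s t = (\<Prod>k<m. (t - x (r + int k))) / (\<Prod>k<m. (t - x' (s + int k)))"

end

theory Submission
  imports Defs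
begin

text \<open>
  Since \<open>P(m+1,r,s) = P(m,r,s) P(1,r+m,s+m)\<close>, we induct on \<open>m\<close> using the Leibniz rules
  \<open>\<D>(fg) = \<D>f \<M>g + \<M>f \<D>g\<close> and \<open>\<M>(fg) = \<M>f \<M>g + (x\<^sup>+ - x\<^sup>-)\<^sup>2/4 \<D>f \<D>g\<close>, in which
  \<open>Y\<^sub>2\<^sup>2 (x\<^sup>+ - x\<^sup>-)\<^sup>2 = Y\<^sub>1\<^sup>2 - 4 Y\<^sub>0 Y\<^sub>2\<close> is a quartic polynomial in \<open>y\<close>; the case \<open>m = 1\<close> is
  an explicit computation. In the induction step the new numerators \<open>C D\<^sub>1 + C\<^sub>1 D\<close> (quadratic)
  and \<open>D D\<^sub>1 + C C\<^sub>1 (Y\<^sub>1\<^sup>2 - 4 Y\<^sub>0 Y\<^sub>2)/4\<close> (quartic) vanish at \<open>y(r+m-1)\<close> and at \<open>y'(s+m-1)\<close>,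
  because there the values of \<open>D\<close> and \<open>D\<^sub>1\<close> are opposite multiples of \<open>C\<close> and \<open>C\<^sub>1\<close>.
  Dividing out these two roots yields the new constant and the new quadratic: the factor
  \<open>y - y'(s+m-1)\<close> cancels against the denominator and \<open>y - y(r+m-1)\<close> joins the numerator.
  The values of \<open>D\<close> at the two \<open>y\<close>-ends hold because \<open>P\<close> vanishes at \<open>x(r)\<close> and \<open>x(r+m-1)\<close>;
  those at the two \<open>y'\<close>-ends are carried along the induction.
\<close>

lemma Ycoef_eq: "Ycoef c i z = c i 0 + c i 1 * z + c i 2 * z^2"
  by (simp add: Ycoef_def numeral_2_eq_2)

lemma Fb_eq_Ycoef: "Fb c t z = Ycoef c 0 z + t * Ycoef c 1 z + t^2 * Ycoef c 2 z"
  by (simp add: Fb_def Ycoef_eq numeral_2_eq_2 algebra_simps)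

lemma root_pair_Vieta:
  assumes "root_pair c z x1 x2"
  shows "Ycoef c 1 z = - Ycoef c 2 z * (x1 + x2)" and "Ycoef c 0 z = Ycoef c 2 z * x1 * x2"
proof -
  from assms have "x1 \<noteq> x2" and "Fb c x1 z - Fb c x2 z = 0" by (simp_all add: root_pair_def)
  moreover have "Fb c x1 z - Fb c x2 z = (x1 - x2) * (Ycoef c 1 z + Ycoef c 2 z * (x1 + x2))"
    unfolding Fb_eq_Ycoef by algebra
  ultimately show sum: "Ycoef c 1 z = - Ycoef c 2 z * (x1 + x2)"
    by (simp add: add_eq_0_iff2)
  from assms have "Fb c x1 z = 0" by (simp add: root_pair_def)
  then show "Ycoef c 0 z = Ycoef c 2 z * x1 * x2"
    unfolding Fb_eq_Ycoef sum by algebra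
qed

lemma root_pair_Fb_eq:
  assumes "root_pair c z x1 x2"
  shows "Fb c t z = Ycoef c 2 z * (t - x1) * (t - x2)"
  unfolding Fb_eq_Ycoef root_pair_Vieta[OF assms] by algebra

definition Ypoly :: "(nat \<Rightarrow> nat \<Rightarrow> complex) \<Rightarrow> nat \<Rightarrow> complex poly" where
  "Ypoly c i = [:c i 0, c i 1, c i 2:]"

lemma poly_Ypoly [simp]: "poly (Ypoly c i) z = Ycoef c i z"
  by (simp add: Ypoly_def Ycoef_eq algebra_simps power2_eq_square)

lemma degree_Ypoly: "degree (Ypoly c i) \<le> 2"
  by (simp add: Ypoly_def)

definition disc_poly :: "(nat \<Rightarrow> nat \<Rightarrow> complex) \<Rightarrow> complex poly" where
  "disc_poly c = Ypoly c 1 ^ 2 - smult 4 (Ypoly c 0 * Ypoly c 2)"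

lemma degree_disc_poly: "degree (disc_poly c) \<le> 4"
proof -
  have "degree (Ypoly c 1 ^ 2) \<le> 4"
    using degree_power_le[of "Ypoly c 1" 2] degree_Ypoly[of c 1] by simp
  moreover have "degree (Ypoly c 0 * Ypoly c 2) \<le> 4"
    using degree_mult_le[of "Ypoly c 0" "Ypoly c 2"] add_mono[OF degree_Ypoly[of c 0] degree_Ypoly[of c 2]]
    by simp
  ultimately show ?thesis
    unfolding disc_poly_def by (meson degree_diff_le degree_smult_le order_trans)
qed

lemma poly_disc_poly_root_pair:
  assumes "root_pair c z x1 x2"
  shows "poly (disc_poly c) z = (Ycoef c 2 z * (x1 - x2))^2"
  unfolding disc_poly_def poly_diff poly_power poly_smult poly_mult poly_Ypoly root_pair_Vieta[OF assms]
  by algebra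

lemma elliptic_seq_Fb_y:
  "elliptic_seq c x y \<Longrightarrow> Fb c t (y n) = Ycoef c 2 (y n) * (t - x n) * (t - x (n + 1))"
  by (simp add: elliptic_seq_def)

lemma elliptic_seq_Fb_x:
  "elliptic_seq c x y \<Longrightarrow> Fb c (x n) t = Xcoef c 2 (x n) * (t - y (n - 1)) * (t - y n)"
  by (simp add: elliptic_seq_def)

lemma elliptic_seq_root_pair:
  assumes "elliptic_seq c x y" "inj x" "Ycoef c 2 (y n) \<noteq> 0"
  shows "root_pair c (y n) (x n) (x (n + 1))"
  using assms by (simp add: root_pair_def elliptic_seq_Fb_y inj_eq)

lemma Dop_mult:
  "Dop (\<lambda>t. f t * g t) x1 x2 = Dop f x1 x2 * Mop g x1 x2 + Mop f x1 x2 * Dop g x1 x2"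
proof (cases "x1 = x2")
  case False
  define d where "d = x1 - x2"
  with False have "d \<noteq> 0" by simp
  then show ?thesis unfolding Dop_def Mop_def d_def[symmetric] by (simp add: field_simps)
qed (simp add: Dop_def)

lemma Mop_mult:
  "Mop (\<lambda>t. f t * g t) x1 x2 = Mop f x1 x2 * Mop g x1 x2 + (x1 - x2)^2 / 4 * Dop f x1 x2 * Dop g x1 x2"
proof (cases "x1 = x2")
  case False
  define d where "d = x1 - x2"
  with False have "d \<noteq> 0" by simp
  then show ?thesis unfolding Dop_def Mop_def d_def[symmetric] by (simp add: field_simps power2_eq_square)
qed (simp add: Dop_def Mop_def)

lemma Mop_eq_Dop_if_root_right: "f x2 = 0 \<Longrightarrow> Mop f x1 x2 = (x1 - x2) / 2 * Dop f x1 x2"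
  by (cases "x1 = x2") (simp_all add: Dop_def Mop_def divide_simps algebra_simps)

lemma Mop_eq_Dop_if_root_left: "f x1 = 0 \<Longrightarrow> Mop f x1 x2 = (x2 - x1) / 2 * Dop f x1 x2"
  by (cases "x1 = x2") (simp_all add: Dop_def Mop_def divide_simps algebra_simps)

lemma Dop_Moebius:
  assumes "x1 \<noteq> b" "x2 \<noteq> b" "x1 \<noteq> x2"
  shows "Dop (\<lambda>t. (t - a) / (t - b)) x1 x2 = (a - b) / ((x1 - b) * (x2 - b))"
proof -
  have "(x1 - a) / (x1 - b) - (x2 - a) / (x2 - b) =
      ((x1 - a) * (x2 - b) - (x2 - a) * (x1 - b)) / ((x1 - b) * (x2 - b))"
    using assms by (simp add: diff_frac_eq)
  also have "(x1 - a) * (x2 - b) - (x2 - a) * (x1 - b) = (a - b) * (x1 - x2)"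
    by algebra
  finally show ?thesis
    using assms by (simp add: Dop_def)
qed

lemma Mop_Moebius:
  assumes "x1 \<noteq> b" "x2 \<noteq> b"
  shows "Mop (\<lambda>t. (t - a) / (t - b)) x1 x2 =
    (x1 * x2 - (a + b) * (x1 + x2) / 2 + a * b) / ((x1 - b) * (x2 - b))"
proof -
  have "x1 - b \<noteq> 0" "x2 - b \<noteq> 0" using assms by simp_all
  then show ?thesis by (simp add: Mop_def field_simps)
qed

lemma Pmrs_one: "Pmrs x x' 1 r s = (\<lambda>t. (t - x r) / (t - x' s))"
  by (simp add: Pmrs_def fun_eq_iff)

lemma Pmrs_Suc:
  "Pmrs x x' (Suc m) r s = (\<lambda>t. Pmrs x x' m r s t * Pmrs x x' 1 (r + int m) (s + int m) t)"
  by (simp add: Pmrs_def fun_eq_iff)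

lemma Pmrs_zero: "k < m \<Longrightarrow> Pmrs x x' m r s (x (r + int k)) = 0"
  by (auto simp: Pmrs_def prod_zero_iff)

lemma poly_two_roots_factor:
  fixes p :: "'a::idom poly"
  assumes "poly p a = 0" "poly p b = 0" "a \<noteq> b" "degree p \<le> n + 2"
  obtains q where "\<And>z. poly p z = (z - a) * (z - b) * poly q z" "degree q \<le> n"
proof -
  obtain p1 where p1: "p = [:-a, 1:] * p1"
    using assms(1) poly_eq_0_iff_dvd by blast
  with assms(2,3) have "poly p1 b = 0" by simp
  then obtain q where q: "p1 = [:-b, 1:] * q"
    using poly_eq_0_iff_dvd by blast
  have pq: "p = [:-a, 1:] * [:-b, 1:] * q"
    unfolding p1 q by (rule mult.assoc[symmetric])
  have "degree q \<le> n"
  proof (cases "q = 0")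
    case False
    have "degree ([:-a, 1:] * [:-b, 1:]) = 2"
      by (subst degree_mult_eq) auto
    with False have "degree p = 2 + degree q"
      unfolding pq by (subst degree_mult_eq) auto
    with assms(4) show ?thesis by simp
  qed simp
  moreover have "poly p z = (z - a) * (z - b) * poly q z" for z
    unfolding pq by (simp add: algebra_simps)
  ultimately show ?thesis using that by blast
qed

text \<open>In the two lemmas below \<open>d\<close>, \<open>d1\<close> are the values of \<open>D\<close>, \<open>D\<^sub>1\<close> at a point \<open>y\<close>, \<open>\<Delta>\<close> is
  the discriminant there and \<open>\<kappa> = \<plusminus>Y\<^sub>2(y)(x\<^sup>+ - x\<^sup>-)/2\<close>.\<close>

lemma boundary_relation_cancels:
  fixes C C1 d d1 \<kappa> \<Delta> :: "'a::field_char_0"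
  assumes "d = \<kappa> * C" "d1 = - \<kappa> * C1" "\<Delta> = 4 * \<kappa>^2"
  shows "C * d1 + C1 * d = 0" and "d * d1 + C * C1 / 4 * \<Delta> = 0"
  using assms by (simp_all add: algebra_simps power2_eq_square)

lemma boundary_relation_propagates:
  fixes C C1 C' d d1 d' \<kappa> \<Delta> w :: "'a::field_char_0"
  assumes "C * d1 + C1 * d = w * C'" "d * d1 + C * C1 / 4 * \<Delta> = w * d'"
    and "\<Delta> = 4 * \<kappa>^2" "d = \<kappa> * C \<or> d1 = \<kappa> * C1" "w \<noteq> 0"
  shows "d' = \<kappa> * C'"
proof -
  have "w * d' = \<kappa> * (C * d1 + C1 * d)"
    using assms(2-4) by (auto simp: algebra_simps power2_eq_square)
  with assms(1,5) show ?thesis by simp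
qed

lemma DM_numerators_factor:
  fixes D D1 :: "complex poly"
  assumes "degree D \<le> 2" "degree D1 \<le> 2" "a \<noteq> b"
    and roots: "\<And>z. z = a \<or> z = b \<Longrightarrow> C * poly D1 z + C1 * poly D z = 0 \<and>
      poly D z * poly D1 z + C * C1 / 4 * poly (disc_poly c) z = 0"
  obtains C' D' where "degree D' \<le> 2"
    and "\<And>z. C * poly D1 z + C1 * poly D z = (z - a) * (z - b) * C'"
    and "\<And>z. poly D z * poly D1 z + C * C1 / 4 * poly (disc_poly c) z = (z - a) * (z - b) * poly D' z"
proof -
  define N M where "N = smult C D1 + smult C1 D"
    and "M = D * D1 + smult (C * C1 / 4) (disc_poly c)"
  have "poly N a = 0" "poly N b = 0" "poly M a = 0" "poly M b = 0"
    using roots[of a] roots[of b] by (simp_all add: N_def M_def)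
  moreover have "degree N \<le> 0 + 2" "degree M \<le> 2 + 2"
    using assms(1,2) degree_disc_poly[of c] unfolding N_def M_def
    by (auto intro!: degree_add_le order.trans[OF degree_mult_le] order.trans[OF degree_smult_le])
  ultimately obtain q D' where
    N: "\<And>z. poly N z = (z - a) * (z - b) * poly q z" and "degree q \<le> 0"
    and M: "\<And>z. poly M z = (z - a) * (z - b) * poly D' z" and "degree D' \<le> 2"
    using poly_two_roots_factor \<open>a \<noteq> b\<close> by metis
  moreover from \<open>degree q \<le> 0\<close> obtain C' where "q = [:C':]"
    by (metis degree0_coeffs le_zero_eq)
  ultimately show ?thesis
    using that[of D' C'] unfolding N_def M_def by simp
qed

definition DM_formula ::
  "(nat \<Rightarrow> nat \<Rightarrow> complex) \<Rightarrow> (int \<Rightarrow> complex) \<Rightarrow> (int \<Rightarrow> complex) \<Rightarrow> (int \<Rightarrow> complex) \<Rightarrow>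
    (int \<Rightarrow> complex) \<Rightarrow> nat \<Rightarrow> int \<Rightarrow> int \<Rightarrow> complex \<Rightarrow> complex poly \<Rightarrow> bool" where
  "DM_formula c x y x' y' m r s C D \<longleftrightarrow>
    (\<forall>yy x1 x2. root_pair c yy x1 x2 \<and>
        (\<forall>k<m. x1 \<noteq> x' (s + int k) \<and> x2 \<noteq> x' (s + int k)) \<and>
        (\<forall>k\<le>m. yy \<noteq> y' (s - 1 + int k)) \<longrightarrow>
       Dop (Pmrs x x' m r s) x1 x2 =
         C * Ycoef c 2 yy * (\<Prod>k<m - 1. (yy - y (r + int k))) / (\<Prod>k\<le>m. (yy - y' (s - 1 + int k))) \<and>
       Mop (Pmrs x x' m r s) x1 x2 =
         poly D yy * (\<Prod>k<m - 1. (yy - y (r + int k))) / (\<Prod>k\<le>m. (yy - y' (s - 1 + int k))))"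

definition DM_data ::
  "(nat \<Rightarrow> nat \<Rightarrow> complex) \<Rightarrow> (int \<Rightarrow> complex) \<Rightarrow> (int \<Rightarrow> complex) \<Rightarrow> (int \<Rightarrow> complex) \<Rightarrow>
    (int \<Rightarrow> complex) \<Rightarrow> nat \<Rightarrow> int \<Rightarrow> int \<Rightarrow> complex \<Rightarrow> complex poly \<Rightarrow> bool" where
  "DM_data c x y x' y' m r s C D \<longleftrightarrow> degree D \<le> 2 \<and> DM_formula c x y x' y' m r s C D \<and>
    poly D (y' (s - 1)) = (1/2) * C * Ycoef c 2 (y' (s - 1)) * (x' s - x' (s - 1)) \<and>
    poly D (y' (s + int m - 1)) =
      - (1/2) * C * Ycoef c 2 (y' (s + int m - 1)) * (x' (s + int m) - x' (s + int m - 1))"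

definition C_one ::
  "(nat \<Rightarrow> nat \<Rightarrow> complex) \<Rightarrow> (int \<Rightarrow> complex) \<Rightarrow> (int \<Rightarrow> complex) \<Rightarrow> int \<Rightarrow> int \<Rightarrow> complex" where
  "C_one c x x' r s = (x r - x' s) / Xcoef c 2 (x' s)"

definition D_one ::
  "(nat \<Rightarrow> nat \<Rightarrow> complex) \<Rightarrow> (int \<Rightarrow> complex) \<Rightarrow> (int \<Rightarrow> complex) \<Rightarrow> int \<Rightarrow> int \<Rightarrow> complex poly" where
  "D_one c x x' r s = smult (1 / Xcoef c 2 (x' s))
     (Ypoly c 0 + smult ((x r + x' s) / 2) (Ypoly c 1) + smult (x r * x' s) (Ypoly c 2))"

lemma poly_D_one:
  "poly (D_one c x x' r s) t =
    (Ycoef c 0 t + (x r + x' s) * Ycoef c 1 t / 2 + x r * x' s * Ycoef c 2 t) / Xcoef c 2 (x' s)"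
  by (simp add: D_one_def field_simps)

lemma degree_D_one: "degree (D_one c x x' r s) \<le> 2"
  unfolding D_one_def
  by (meson degree_Ypoly degree_add_le degree_smult_le order_trans)

lemma DM_formula_one_values:
  assumes "DM_formula c x y x' y' 1 r s C D" "root_pair c z x1 x2"
    and "x1 \<noteq> x' s" "x2 \<noteq> x' s" "z \<noteq> y' (s - 1)" "z \<noteq> y' s"
  shows "Dop (Pmrs x x' 1 r s) x1 x2 = C * Ycoef c 2 z / ((z - y' (s - 1)) * (z - y' s))"
    and "Mop (Pmrs x x' 1 r s) x1 x2 = poly D z / ((z - y' (s - 1)) * (z - y' s))"
proof -
  have "\<forall>k\<le>1. z \<noteq> y' (s - 1 + int k)"
    using assms(5,6) by (auto simp: le_Suc_eq)
  moreover have "(\<Prod>k\<le>1. z - y' (s - 1 + int k)) = (z - y' (s - 1)) * (z - y' s)"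
    by (simp add: atMost_Suc)
  ultimately show "Dop (Pmrs x x' 1 r s) x1 x2 = C * Ycoef c 2 z / ((z - y' (s - 1)) * (z - y' s))"
    and "Mop (Pmrs x x' 1 r s) x1 x2 = poly D z / ((z - y' (s - 1)) * (z - y' s))"
    using assms(1-4) unfolding DM_formula_def by auto
qed

locale elliptic_pair =
  fixes c :: "nat \<Rightarrow> nat \<Rightarrow> complex" and x y x' y' :: "int \<Rightarrow> complex"
  assumes ell: "elliptic_seq c x y" and ell': "elliptic_seq c x' y'"
    and gp: "general_position c x y x' y'"
begin

lemma y_eq_iff [simp]: "y i = y j \<longleftrightarrow> i = j"
  and y'_eq_iff [simp]: "y' i = y' j \<longleftrightarrow> i = j"
  and x_neq_x' [simp]: "x i \<noteq> x' j"
  and y_neq_y' [simp]: "y i \<noteq> y' j"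
  and Xcoef_x'_nonzero [simp]: "Xcoef c 2 (x' i) \<noteq> 0"
  using gp by (simp_all add: general_position_def inj_eq)

lemma y'_neq_y [simp]: "y' j \<noteq> y i"
  using y_neq_y' by (rule not_sym)

lemma root_pair_y: "root_pair c (y n) (x n) (x (n + 1))"
  using elliptic_seq_root_pair[OF ell] gp by (simp add: general_position_def)

lemma root_pair_y': "root_pair c (y' n) (x' n) (x' (n + 1))"
  using elliptic_seq_root_pair[OF ell'] gp by (simp add: general_position_def)

lemma poly_disc_poly_y:
  "poly (disc_poly c) (y n) = 4 * ((1/2) * Ycoef c 2 (y n) * (x (n + 1) - x n))^2"
  unfolding poly_disc_poly_root_pair[OF root_pair_y] by (simp add: power2_eq_square algebra_simps)

lemma poly_disc_poly_y':
  "poly (disc_poly c) (y' n) = 4 * ((1/2) * Ycoef c 2 (y' n) * (x' (n + 1) - x' n))^2"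
  unfolding poly_disc_poly_root_pair[OF root_pair_y'] by (simp add: power2_eq_square algebra_simps)

lemma DM_formula_at_y:
  assumes "DM_formula c x y x' y' m r s C D"
    and "\<forall>k<m - 1. n \<noteq> r + int k"
    and "Mop (Pmrs x x' m r s) (x n) (x (n + 1)) = \<kappa> * Dop (Pmrs x x' m r s) (x n) (x (n + 1))"
  shows "poly D (y n) = \<kappa> * C * Ycoef c 2 (y n)"
proof -
  define q where "q = (\<Prod>k<m - 1. y n - y (r + int k)) / (\<Prod>k\<le>m. y n - y' (s - 1 + int k))"
  have "q \<noteq> 0"
    using assms(2) by (auto simp: q_def)
  moreover have "Dop (Pmrs x x' m r s) (x n) (x (n + 1)) = C * Ycoef c 2 (y n) * q"
    and "Mop (Pmrs x x' m r s) (x n) (x (n + 1)) = poly D (y n) * q"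
    using assms(1) root_pair_y[of n] unfolding DM_formula_def q_def by auto
  ultimately show ?thesis
    using assms(3) by (simp add: ac_simps)
qed

lemma DM_formula_left_end:
  assumes "DM_formula c x y x' y' m r s C D" "m \<ge> 1"
  shows "poly D (y (r - 1)) = - (1/2) * C * Ycoef c 2 (y (r - 1)) * (x r - x (r - 1))"
proof -
  have "Pmrs x x' m r s (x (r - 1 + 1)) = 0"
    using Pmrs_zero[of 0 m] assms(2) by simp
  then have "poly D (y (r - 1)) = (x (r - 1) - x (r - 1 + 1)) / 2 * C * Ycoef c 2 (y (r - 1))"
    by (intro DM_formula_at_y[OF assms(1)] Mop_eq_Dop_if_root_right) auto
  then show ?thesis
    by (simp add: field_simps)
qed

lemma DM_formula_right_end:
  assumes "DM_formula c x y x' y' m r s C D" "m \<ge> 1"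
  shows "poly D (y (r + int m - 1)) =
    (1/2) * C * Ycoef c 2 (y (r + int m - 1)) * (x (r + int m) - x (r + int m - 1))"
proof -
  have "Pmrs x x' m r s (x (r + int m - 1)) = 0"
    using Pmrs_zero[of "m - 1" m] assms(2) by (simp add: of_nat_diff algebra_simps)
  then have "poly D (y (r + int m - 1)) =
      (x (r + int m - 1 + 1) - x (r + int m - 1)) / 2 * C * Ycoef c 2 (y (r + int m - 1))"
    by (intro DM_formula_at_y[OF assms(1)] Mop_eq_Dop_if_root_left) auto
  then show ?thesis
    by (simp add: field_simps)
qed

lemma DM_formula_one: "DM_formula c x y x' y' 1 r s (C_one c x x' r s) (D_one c x x' r s)"
proof (unfold DM_formula_def, intro allI impI)
  fix z x1 x2
  assume "root_pair c z x1 x2 \<and> (\<forall>k<1. x1 \<noteq> x' (s + int k) \<and> x2 \<noteq> x' (s + int k)) \<and>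
    (\<forall>k\<le>1. z \<noteq> y' (s - 1 + int k))"
  then have rp: "root_pair c z x1 x2" and x12: "x1 \<noteq> x' s" "x2 \<noteq> x' s"
    and "z \<noteq> y' (s - 1)" "z \<noteq> y' s"
    by (auto dest: spec[of _ 0] spec[of _ 1])
  then have E: "(z - y' (s - 1)) * (z - y' s) \<noteq> 0" by simp
  have "x1 \<noteq> x2" and Y: "Ycoef c 2 z \<noteq> 0"
    using rp by (auto simp: root_pair_def)
  have "(x1 - x' s) * (x2 - x' s) * Ycoef c 2 z = Xcoef c 2 (x' s) * ((z - y' (s - 1)) * (z - y' s))"
    using root_pair_Fb_eq[OF rp, of "x' s"] elliptic_seq_Fb_x[OF ell', of s z]
    by (simp add: algebra_simps)
  then have W: "(x1 - x' s) * (x2 - x' s) = Xcoef c 2 (x' s) * ((z - y' (s - 1)) * (z - y' s)) / Ycoef c 2 z"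
    using Y by (simp add: field_simps)
  have prods: "(\<Prod>k<1 - 1. z - y (r + int k)) = 1"
    "(\<Prod>k\<le>1. z - y' (s - 1 + int k)) = (z - y' (s - 1)) * (z - y' s)"
    by (simp_all add: atMost_Suc)
  show "Dop (Pmrs x x' 1 r s) x1 x2 = C_one c x x' r s * Ycoef c 2 z * (\<Prod>k<1 - 1. z - y (r + int k)) /
      (\<Prod>k\<le>1. z - y' (s - 1 + int k)) \<and>
    Mop (Pmrs x x' 1 r s) x1 x2 = poly (D_one c x x' r s) z * (\<Prod>k<1 - 1. z - y (r + int k)) /
      (\<Prod>k\<le>1. z - y' (s - 1 + int k))"
    unfolding prods Pmrs_one Dop_Moebius[OF x12 \<open>x1 \<noteq> x2\<close>] Mop_Moebius[OF x12] W
      C_one_def poly_D_one root_pair_Vieta[OF rp]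
    using Y E by (simp add: field_simps)
qed

lemma DM_data_one: "DM_data c x y x' y' 1 r s (C_one c x x' r s) (D_one c x x' r s)"
  unfolding DM_data_def
proof (intro conjI degree_D_one DM_formula_one)
  show "poly (D_one c x x' r s) (y' (s - 1)) =
      (1/2) * C_one c x x' r s * Ycoef c 2 (y' (s - 1)) * (x' s - x' (s - 1))"
    unfolding poly_D_one C_one_def root_pair_Vieta[OF root_pair_y'[of "s - 1"]]
    by (simp add: field_simps)
  have "poly (D_one c x x' r s) (y' s) =
      - (1/2) * C_one c x x' r s * Ycoef c 2 (y' s) * (x' (s + 1) - x' s)"
    unfolding poly_D_one C_one_def root_pair_Vieta[OF root_pair_y'[of s]]
    by (simp add: field_simps)
  then show "poly (D_one c x x' r s) (y' (s + int 1 - 1)) =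
      - (1/2) * C_one c x x' r s * Ycoef c 2 (y' (s + int 1 - 1)) * (x' (s + int 1) - x' (s + int 1 - 1))"
    by simp
qed

lemma DM_formula_Suc:
  assumes "m \<ge> 1"
    and DM: "DM_formula c x y x' y' m r s C D"
    and DM1: "DM_formula c x y x' y' 1 (r + int m) (s + int m) C1 D1"
    and N: "\<And>z. C * poly D1 z + C1 * poly D z =
      (z - y (r + int m - 1)) * (z - y' (s + int m - 1)) * C'"
    and M: "\<And>z. poly D z * poly D1 z + C * C1 / 4 * poly (disc_poly c) z =
      (z - y (r + int m - 1)) * (z - y' (s + int m - 1)) * poly D' z"
  shows "DM_formula c x y x' y' (Suc m) r s C' D'"
proof -
  have "Dop (Pmrs x x' (Suc m) r s) x1 x2 =
      C' * Ycoef c 2 z * (\<Prod>k<Suc m - 1. z - y (r + int k)) / (\<Prod>k\<le>Suc m. z - y' (s - 1 + int k)) \<and>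
    Mop (Pmrs x x' (Suc m) r s) x1 x2 =
      poly D' z * (\<Prod>k<Suc m - 1. z - y (r + int k)) / (\<Prod>k\<le>Suc m. z - y' (s - 1 + int k))"
    if rp: "root_pair c z x1 x2" and hx: "\<forall>k<Suc m. x1 \<noteq> x' (s + int k) \<and> x2 \<noteq> x' (s + int k)"
      and hy: "\<forall>k\<le>Suc m. z \<noteq> y' (s - 1 + int k)" for z x1 x2
  proof -
    define a b w where "a = y (r + int m - 1)" and "b = y' (s + int m - 1)" and "w = y' (s + int m)"
    define nu de where "nu = (\<Prod>k<m - 1. z - y (r + int k))"
      and "de = (\<Prod>k\<le>m. z - y' (s - 1 + int k))"
    have "x1 \<noteq> x' (s + int m)" "x2 \<noteq> x' (s + int m)" "z \<noteq> b" "z \<noteq> w"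
      using hx hy unfolding b_def w_def by (auto dest: spec[of _ m] spec[of _ "Suc m"] simp: algebra_simps)
    then have D1: "Dop (Pmrs x x' 1 (r + int m) (s + int m)) x1 x2 = C1 * Ycoef c 2 z / ((z - b) * (z - w))"
      and M1: "Mop (Pmrs x x' 1 (r + int m) (s + int m)) x1 x2 = poly D1 z / ((z - b) * (z - w))"
      using DM_formula_one_values[OF DM1 rp] unfolding b_def w_def by simp_all
    have Dm: "Dop (Pmrs x x' m r s) x1 x2 = C * Ycoef c 2 z * nu / de"
      and Mm: "Mop (Pmrs x x' m r s) x1 x2 = poly D z * nu / de"
      using DM rp hx hy unfolding DM_formula_def nu_def de_def by auto
    have nu_Suc: "(\<Prod>k<Suc m - 1. z - y (r + int k)) = nu * (z - a)"
      using \<open>m \<ge> 1\<close> unfolding nu_def a_def by (cases m) (simp_all add: algebra_simps)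
    have de_Suc: "(\<Prod>k\<le>Suc m. z - y' (s - 1 + int k)) = de * (z - w)"
      unfolding de_def w_def by (simp add: algebra_simps)
    have nonzero: "de \<noteq> 0" "z - b \<noteq> 0" "z - w \<noteq> 0"
      using hy \<open>z \<noteq> b\<close> \<open>z \<noteq> w\<close> unfolding de_def by auto
    have "Dop (Pmrs x x' (Suc m) r s) x1 x2 =
        Ycoef c 2 z * nu * (C * poly D1 z + C1 * poly D z) / (de * ((z - b) * (z - w)))"
      unfolding Pmrs_Suc Dop_mult Dm Mm D1 M1 using nonzero by (simp add: field_simps add_divide_distrib)
    also have "\<dots> = C' * Ycoef c 2 z * (nu * (z - a)) / (de * (z - w))"
      unfolding N[of z, folded a_def b_def] using nonzero by (simp add: divide_simps)
    finally have "Dop (Pmrs x x' (Suc m) r s) x1 x2 = C' * Ycoef c 2 z * (nu * (z - a)) / (de * (z - w))" .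
    moreover have "Mop (Pmrs x x' (Suc m) r s) x1 x2 =
        nu * (poly D z * poly D1 z + C * C1 / 4 * (Ycoef c 2 z * (x1 - x2))^2) / (de * ((z - b) * (z - w)))"
      unfolding Pmrs_Suc Mop_mult Dm Mm D1 M1 using nonzero
      by (simp add: divide_simps) (simp add: algebra_simps power2_eq_square)
    moreover have "\<dots> = poly D' z * (nu * (z - a)) / (de * (z - w))"
      unfolding M[of z, folded a_def b_def, unfolded poly_disc_poly_root_pair[OF rp]]
      using nonzero by (simp add: divide_simps)
    ultimately show ?thesis
      unfolding nu_Suc de_Suc by simp
  qed
  then show ?thesis
    unfolding DM_formula_def by blast
qed

lemma DM_numerators_vanish:
  assumes "m \<ge> 1"
    and data: "DM_data c x y x' y' m r s C D"
    and data1: "DM_data c x y x' y' 1 (r + int m) (s + int m) C1 D1"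
    and "z = y (r + int m - 1) \<or> z = y' (s + int m - 1)"
  shows "C * poly D1 z + C1 * poly D z = 0 \<and>
    poly D z * poly D1 z + C * C1 / 4 * poly (disc_poly c) z = 0"
proof -
  obtain \<kappa> where "poly D z = \<kappa> * C" "poly D1 z = - \<kappa> * C1" "poly (disc_poly c) z = 4 * \<kappa>^2"
    using \<open>z = y (r + int m - 1) \<or> z = y' (s + int m - 1)\<close>
  proof
    assume z: "z = y (r + int m - 1)"
    have "DM_formula c x y x' y' m r s C D" "DM_formula c x y x' y' 1 (r + int m) (s + int m) C1 D1"
      using data data1 by (simp_all add: DM_data_def)
    from DM_formula_right_end[OF this(1) \<open>m \<ge> 1\<close>] DM_formula_left_end[OF this(2)]
    show thesis
      by (intro that[of "(1/2) * Ycoef c 2 z * (x (r + int m) - x (r + int m - 1))"])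
        (simp_all add: z poly_disc_poly_y[of "r + int m - 1"] ac_simps)
  next
    assume z: "z = y' (s + int m - 1)"
    from data data1 show thesis
      by (intro that[of "- (1/2) * Ycoef c 2 z * (x' (s + int m) - x' (s + int m - 1))"])
        (simp_all add: z DM_data_def poly_disc_poly_y'[of "s + int m - 1"] ac_simps power2_eq_square)
  qed
  from boundary_relation_cancels[OF this] show ?thesis ..
qed

lemma DM_data_Suc:
  assumes "m \<ge> 1" and data: "DM_data c x y x' y' m r s C D"
  shows "\<exists>C' D'. DM_data c x y x' y' (Suc m) r s C' D'"
proof -
  define C1 D1 where "C1 = C_one c x x' (r + int m) (s + int m)"
    and "D1 = D_one c x x' (r + int m) (s + int m)"
  define a b where "a = y (r + int m - 1)" and "b = y' (s + int m - 1)"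
  have data1: "DM_data c x y x' y' 1 (r + int m) (s + int m) C1 D1"
    unfolding C1_def D1_def by (rule DM_data_one)
  obtain C' D' where "degree D' \<le> 2"
    and N: "\<And>z. C * poly D1 z + C1 * poly D z = (z - a) * (z - b) * C'"
    and M: "\<And>z. poly D z * poly D1 z + C * C1 / 4 * poly (disc_poly c) z = (z - a) * (z - b) * poly D' z"
  proof (rule DM_numerators_factor)
    show "degree D \<le> 2" "degree D1 \<le> 2"
      using data data1 by (simp_all add: DM_data_def)
    show "a \<noteq> b"
      by (simp add: a_def b_def)
  qed (use DM_numerators_vanish[OF \<open>m \<ge> 1\<close> data data1] in \<open>auto simp: a_def b_def\<close>)
  have "DM_formula c x y x' y' (Suc m) r s C' D'"
    using DM_formula_Suc[OF \<open>m \<ge> 1\<close>] data data1 N M unfolding DM_data_def a_def b_def by blast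
  moreover have "poly D' (y' (s - 1)) = ((1/2) * Ycoef c 2 (y' (s - 1)) * (x' s - x' (s - 1))) * C'"
    by (rule boundary_relation_propagates[OF N M])
      (use data \<open>m \<ge> 1\<close> poly_disc_poly_y'[of "s - 1"] in \<open>auto simp: DM_data_def a_def b_def ac_simps\<close>)
  moreover have "poly D' (y' (s + int m)) =
      (- (1/2) * Ycoef c 2 (y' (s + int m)) * (x' (s + int m + 1) - x' (s + int m))) * C'"
    by (rule boundary_relation_propagates[OF N M])
      (use data1 poly_disc_poly_y'[of "s + int m"] in \<open>auto simp: DM_data_def a_def b_def ac_simps power2_eq_square\<close>)
  ultimately have "DM_data c x y x' y' (Suc m) r s C' D'"
    using \<open>degree D' \<le> 2\<close> by (simp add: DM_data_def ac_simps)
  then show ?thesis by blast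
qed

lemma DM_data_exists:
  assumes "m \<ge> 1"
  shows "\<exists>C D. DM_data c x y x' y' m r s C D \<and>
    (m = 1 \<longrightarrow> C = C_one c x x' r s \<and> D = D_one c x x' r s)"
  using assms
proof (induction m rule: nat_induct_at_least)
  case base
  then show ?case using DM_data_one by blast
next
  case (Suc m)
  then show ?case using DM_data_Suc by auto
qed

end

theorem mainTheorem8:
  fixes c :: "nat \<Rightarrow> nat \<Rightarrow> complex"
    and x y x' y' :: "int \<Rightarrow> complex"
  assumes ell: "elliptic_seq c x y"
    and ell': "elliptic_seq c x' y'"
    and gp: "general_position c x y x' y'"
    and m1: "m \<ge> 1"
  shows "\<exists>(C::complex) (D::complex poly). degree D \<le> 2 \<and>
    (\<forall>yy x1 x2. root_pair c yy x1 x2 \<and>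
        (\<forall>k<m. x1 \<noteq> x' (s + int k) \<and> x2 \<noteq> x' (s + int k)) \<and>
        (\<forall>k\<le>m. yy \<noteq> y' (s - 1 + int k)) \<longrightarrow>
       Dop (Pmrs x x' m r s) x1 x2 =
         C * Ycoef c 2 yy * (\<Prod>k<m - 1. (yy - y (r + int k))) / (\<Prod>k\<le>m. (yy - y' (s - 1 + int k))) \<and>
       Mop (Pmrs x x' m r s) x1 x2 =
         poly D yy * (\<Prod>k<m - 1. (yy - y (r + int k))) / (\<Prod>k\<le>m. (yy - y' (s - 1 + int k)))) \<and>
    (m = 1 \<longrightarrow> C = (x r - x' s) / Xcoef c 2 (x' s) \<and>
       (\<forall>t. poly D t = (Ycoef c 0 t + (x r + x' s) * Ycoef c 1 t / 2 + x r * x' s * Ycoef c 2 t)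
                          / Xcoef c 2 (x' s))) \<and>
    poly D (y (r - 1)) = - (1/2) * C * Ycoef c 2 (y (r - 1)) * (x r - x (r - 1)) \<and>
    poly D (y (r + int m - 1)) = (1/2) * C * Ycoef c 2 (y (r + int m - 1)) * (x (r + int m) - x (r + int m - 1)) \<and>
    poly D (y' (s - 1)) = (1/2) * C * Ycoef c 2 (y' (s - 1)) * (x' s - x' (s - 1)) \<and>
    poly D (y' (s + int m - 1)) = - (1/2) * C * Ycoef c 2 (y' (s + int m - 1)) * (x' (s + int m) - x' (s + int m - 1))"
proof -
  interpret elliptic_pair c x y x' y'
    using ell ell' gp by unfold_locales
  obtain C D where data: "DM_data c x y x' y' m r s C D"
    and one: "m = 1 \<longrightarrow> C = C_one c x x' r s \<and> D = D_one c x x' r s"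
    using DM_data_exists[OF m1] by blast
  then have DM: "DM_formula c x y x' y' m r s C D"
    by (simp add: DM_data_def)
  have "m = 1 \<longrightarrow> C = (x r - x' s) / Xcoef c 2 (x' s) \<and>
      (\<forall>t. poly D t = (Ycoef c 0 t + (x r + x' s) * Ycoef c 1 t / 2 + x r * x' s * Ycoef c 2 t)
        / Xcoef c 2 (x' s))"
    using one by (simp add: C_one_def poly_D_one)
  with data DM_formula_left_end[OF DM m1] DM_formula_right_end[OF DM m1] show ?thesis
    unfolding DM_data_def DM_formula_def by blast
qed

end
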